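(* For $a,b>0$, $\lambda\ge0$ and $0<x<1$, $$e^{-\lambda}x^a(1-x)^b\sum_{n=0}^\infty\frac{\Gamma(a+b+n)}{\Gamma(b)\Gamma(a+1+n)}x^n\sum_{j=0}^n\frac{\lambda^j}{j!}=B_{a,b}(2\lambda,x).$$
   Context: For $p,q>0$ and $0\le y\le 1$, $I_y(p,q)=\frac{1}{B(p,q)}\int_0^y t^{p-1}(1-t)^{q-1}\,dt$ is the regularized incomplete beta function, with $B(p,q)=\Gamma(p)\Gamma(q)/\Gamma(p+q)$. The cumulative noncentral beta distribution is $B_{p,q}(x,y)=e^{-x/2}\sum_{j=0}^\infty \frac{1}{j!}\left(\frac x2\right)^j I_y(p+j,q)$ for $x\ge0$. *)

theory Defs
  imports "HOL-Analysis.Analysis"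
begin

definition inc_beta_reg :: "real \<Rightarrow> real \<Rightarrow> real \<Rightarrow> real" where
  "inc_beta_reg y p q =
     integral {0..y} (\<lambda>t. t powr (p - 1) * (1 - t) powr (q - 1)) / Beta p q"

definition noncentral_beta :: "real \<Rightarrow> real \<Rightarrow> real \<Rightarrow> real \<Rightarrow> real" where
  "noncentral_beta p q x y =
     exp (- x / 2) * (\<Sum>j. (1 / fact j) * (x / 2) ^ j * inc_beta_reg y (p + real j) q)"

end

theory Submission
  imports Defs "HOL-Real_Asymp.Real_Asymp"
begin

text \<open>
  For \<open>0 < y < 1\<close> the incomplete beta integral has the classical expansion
  \<open>I_y(p,q) = y^p (1-y)^q \<Sum>\<^sub>m \<Gamma>(p+q+m) / (\<Gamma>(q) \<Gamma>(p+1+m)) y^m\<close>: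
  the right-hand side vanishes at \<open>y = 0\<close>, and the coefficient recursion
  \<open>(p+1+m) c\<^sub>m\<^sub>+\<^sub>1 = (p+q+m) c\<^sub>m\<close> turns into a first-order differential equation
  saying that its derivative is the beta density. Substituting this expansion with \<open>p = a + j\<close>
  into the Poisson mixture defining \<open>B\<^sub>a\<^sub>,\<^sub>b(2\<lambda>,x)\<close> gives a double series with
  nonnegative terms; summing it along the other diagonal direction collects, for each power
  \<open>x^n\<close>, the partial sum \<open>\<Sum>\<^sub>j\<^sub>\<le>\<^sub>n \<lambda>^j/j!\<close> of the exponential series.
\<close>

definition beta_series_coeff :: "real \<Rightarrow> real \<Rightarrow> nat \<Rightarrow> real" where
  "beta_series_coeff p q m = Gamma (p + q + real m) / (Gamma q * Gamma (p + 1 + real m))"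

definition beta_series :: "real \<Rightarrow> real \<Rightarrow> real \<Rightarrow> real" where
  "beta_series p q y = (\<Sum>m. beta_series_coeff p q m * y ^ m)"

lemma Gamma_plus1_real_pos: "(z::real) > 0 \<Longrightarrow> Gamma (z + 1) = z * Gamma z"
  by (rule Gamma_plus1) (auto elim!: nonpos_Ints_cases)

lemma beta_series_coeff_pos: "p > 0 \<Longrightarrow> q > 0 \<Longrightarrow> beta_series_coeff p q m > 0"
  unfolding beta_series_coeff_def by simp

lemma beta_series_coeff_0: "p > 0 \<Longrightarrow> p * beta_series_coeff p q 0 = 1 / Beta p q"
  unfolding beta_series_coeff_def Beta_def
  using Gamma_plus1_real_pos[of p] by (simp add: add.commute)

lemma beta_series_coeff_Suc:
  assumes "p > 0" "q > 0"
  shows "(p + 1 + real m) * beta_series_coeff p q (Suc m)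
           = (p + q + real m) * beta_series_coeff p q m"
proof -
  have "Gamma (p + q + real (Suc m)) = (p + q + real m) * Gamma (p + q + real m)"
    using Gamma_plus1_real_pos[of "p + q + real m"] assms by (simp add: algebra_simps)
  moreover have "Gamma (p + 1 + real (Suc m)) = (p + 1 + real m) * Gamma (p + 1 + real m)"
    using Gamma_plus1_real_pos[of "p + 1 + real m"] assms by (simp add: algebra_simps)
  ultimately have "(p + 1 + real m) * beta_series_coeff p q (Suc m)
      = (p + 1 + real m) * ((p + q + real m) * Gamma (p + q + real m))
          / (Gamma q * ((p + 1 + real m) * Gamma (p + 1 + real m)))"
    unfolding beta_series_coeff_def by simp
  also have "\<dots> = (p + q + real m) * beta_series_coeff p q m"
    using assms unfolding beta_series_coeff_def by simp
  finally show ?thesis .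
qed

lemma beta_series_coeff_shift:
  "beta_series_coeff (p + real j) q m = beta_series_coeff p q (j + m)"
  unfolding beta_series_coeff_def by (simp add: algebra_simps)

lemma conv_radius_beta_series_coeff:
  assumes "p > 0" "q > 0"
  shows "conv_radius (beta_series_coeff p q) = 1"
proof (rule conv_radius_ratio_limit_nonzero)
  have "norm (beta_series_coeff p q m) / norm (beta_series_coeff p q (Suc m))
          = (p + 1 + real m) / (p + q + real m)" for m
  proof -
    have "beta_series_coeff p q (Suc m)
            = (p + q + real m) * beta_series_coeff p q m / (p + 1 + real m)"
      using beta_series_coeff_Suc[OF assms, of m] assms by (simp add: eq_divide_eq mult.commute)
    then show ?thesis
      using beta_series_coeff_pos[OF assms, of m] assms by simp
  qed
  moreover have "(\<lambda>m. (p + 1 + real m) / (p + q + real m)) \<longlonglongrightarrow> 1"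
    using assms by real_asymp
  ultimately show "(\<lambda>m. norm (beta_series_coeff p q m) / norm (beta_series_coeff p q (Suc m)))
                     \<longlonglongrightarrow> 1"
    by simp
qed simp_all

lemma summable_beta_series:
  "p > 0 \<Longrightarrow> q > 0 \<Longrightarrow> norm (y::real) < 1 \<Longrightarrow> summable (\<lambda>m. beta_series_coeff p q m * y ^ m)"
  by (rule summable_in_conv_radius) (simp add: conv_radius_beta_series_coeff)

lemma beta_series_has_real_derivative:
  assumes "p > 0" "q > 0" "norm (y::real) < 1"
  shows "(beta_series p q has_real_derivative (\<Sum>m. diffs (beta_series_coeff p q) m * y ^ m)) (at y)"
  unfolding beta_series_def[abs_def]
  by (rule termdiffs_strong'[of 1]) (use assms summable_beta_series in auto)

lemma beta_series_ode:
  assumes p: "p > 0" and q: "q > 0" and y: "norm (y::real) < 1"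
  defines "S \<equiv> beta_series p q y"
    and "S' \<equiv> \<Sum>m. diffs (beta_series_coeff p q) m * y ^ m"
  shows "p * (1 - y) * S - q * y * S + y * (1 - y) * S' = 1 / Beta p q"
proof -
  let ?c = "beta_series_coeff p q"
  have S: "(\<lambda>m. ?c m * y ^ m) sums S"
    unfolding S_def beta_series_def using summable_beta_series[OF p q y] by (rule summable_sums)
  have "summable (\<lambda>m. diffs ?c m * y ^ m)"
    by (rule termdiff_converges[of y 1]) (use y summable_beta_series[OF p q] in auto)
  then have "(\<lambda>m. y * (diffs ?c m * y ^ m)) sums (y * S')"
    unfolding S'_def by (intro sums_mult summable_sums)
  then have "(\<lambda>m. real (Suc m) * ?c (Suc m) * y ^ Suc m) sums (y * S')"
    by (simp add: diffs_def algebra_simps)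
  then have yS': "(\<lambda>m. real m * ?c m * y ^ m) sums (y * S')"
    by (subst (asm) sums_Suc_iff) simp
  \<comment> \<open>\<open>\<Sum> (p+m) c\<^sub>m y^m\<close> evaluated twice: directly, and after an index shift using the recursion\<close>
  have "(\<lambda>m. p * (?c m * y ^ m) + real m * ?c m * y ^ m) sums (p * S + y * S')"
    by (intro sums_add sums_mult S yS')
  then have direct: "(\<lambda>m. (p + real m) * ?c m * y ^ m) sums (p * S + y * S')"
    by (simp add: algebra_simps)
  have "(\<lambda>m. y * ((p + q) * (?c m * y ^ m) + real m * ?c m * y ^ m)) sums (y * ((p + q) * S + y * S'))"
    by (intro sums_add sums_mult S yS')
  then have "(\<lambda>m. (p + real (Suc m)) * ?c (Suc m) * y ^ Suc m) sums (y * ((p + q) * S + y * S'))"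
    using beta_series_coeff_Suc[OF p q] by (simp add: algebra_simps)
  then have shifted: "(\<lambda>m. (p + real m) * ?c m * y ^ m) sums (y * ((p + q) * S + y * S') + p * ?c 0)"
    by (subst (asm) sums_Suc_iff) simp
  have "p * S + y * S' = y * ((p + q) * S + y * S') + 1 / Beta p q"
    using sums_unique2[OF direct shifted] beta_series_coeff_0[OF p] by simp
  then show ?thesis
    by (simp add: algebra_simps)
qed

lemma beta_antiderivative_has_real_derivative:
  assumes p: "p > 0" and q: "q > 0" and t: "0 < t" "t < (1::real)"
  shows "((\<lambda>t. t powr p * (1 - t) powr q * beta_series p q t) has_real_derivative
           t powr (p - 1) * (1 - t) powr (q - 1) / Beta p q) (at t)"
proof -
  define S where "S = beta_series p q t"
  define S' where "S' = (\<Sum>m. diffs (beta_series_coeff p q) m * t ^ m)"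
  define u where "u = t powr (p - 1)"
  define v where "v = (1 - t) powr (q - 1)"
  have nt: "norm t < 1" using t by simp
  have dS: "(beta_series p q has_real_derivative S') (at t)"
    unfolding S'_def by (rule beta_series_has_real_derivative[OF p q nt])
  have d1: "((\<lambda>t. t powr p) has_real_derivative p * u) (at t)"
    unfolding u_def by (rule has_real_derivative_powr) (use t in simp)
  have d2: "((\<lambda>t. (1 - t) powr q) has_real_derivative q * v * (-1)) (at t)"
    unfolding v_def
    by (rule DERIV_chain2[OF has_real_derivative_powr]) (use t in \<open>auto intro!: derivative_eq_intros\<close>)
  have tu: "t powr p = t * u" and tv: "(1 - t) powr q = (1 - t) * v"
    unfolding u_def v_def using t powr_add[of t "p - 1" 1] powr_add[of "1 - t" "q - 1" 1] by simp_all
  have "(t * u) * ((1 - t) * v) * S' + ((t * u) * (q * v * (-1)) + p * u * ((1 - t) * v)) * S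
          = u * v * (p * (1 - t) * S - q * t * S + t * (1 - t) * S')"
    by (simp add: algebra_simps)
  also have "\<dots> = u * v / Beta p q"
    unfolding S_def S'_def beta_series_ode[OF p q nt] by simp
  finally show ?thesis
    using DERIV_mult'[OF DERIV_mult'[OF d1 d2] dS] unfolding tu tv S_def u_def v_def by simp
qed

lemma inc_beta_reg_eq_beta_series:
  assumes p: "p > 0" and q: "q > 0" and y: "0 < y" "y < (1::real)"
  shows "inc_beta_reg y p q = y powr p * (1 - y) powr q * beta_series p q y"
proof -
  define G where "G = (\<lambda>t. t powr p * (1 - t) powr q * beta_series p q t)"
  have "continuous_on {0..y} (beta_series p q)"
  proof (intro continuous_at_imp_continuous_on ballI)
    fix t assume "t \<in> {0..y}"
    then have "norm t < 1" using y by auto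
    then show "isCont (beta_series p q) t"
      by (rule DERIV_isCont[OF beta_series_has_real_derivative[OF p q]])
  qed
  moreover have "continuous_on {0..y} (\<lambda>t::real. t powr p)"
    by (rule continuous_on_powr') (use p in \<open>auto intro: continuous_intros\<close>)
  moreover have "continuous_on {0..y} (\<lambda>t::real. (1 - t) powr q)"
    by (rule continuous_on_powr') (use y in \<open>auto intro!: continuous_intros\<close>)
  ultimately have "continuous_on {0..y} G"
    unfolding G_def by (intro continuous_on_mult)
  then have "((\<lambda>t. t powr (p - 1) * (1 - t) powr (q - 1) / Beta p q) has_integral (G y - G 0)) {0..y}"
    using y beta_antiderivative_has_real_derivative[OF p q]
    by (intro fundamental_theorem_of_calculus_interior)
       (auto simp: G_def has_real_derivative_iff_has_vector_derivative[symmetric])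
  moreover have "G 0 = 0"
    unfolding G_def by simp
  ultimately have "((\<lambda>t. t powr (p - 1) * (1 - t) powr (q - 1) / Beta p q) has_integral G y) {0..y}"
    by simp
  from integral_unique[OF this] show ?thesis
    unfolding inc_beta_reg_def G_def by simp
qed

lemma inc_beta_reg_shift_eq_series:
  assumes p: "p > 0" and q: "q > 0" and y: "0 < y" "y < (1::real)"
  shows "inc_beta_reg y (p + real j) q
           = y powr p * (1 - y) powr q * (\<Sum>m. beta_series_coeff p q (j + m) * y ^ (j + m))"
proof -
  have "y ^ j * beta_series (p + real j) q y = (\<Sum>m. y ^ j * (beta_series_coeff (p + real j) q m * y ^ m))"
    unfolding beta_series_def using summable_beta_series[of "p + real j" q y] p q y
    by (intro suminf_mult[symmetric]) simp
  also have "\<dots> = (\<Sum>m. beta_series_coeff p q (j + m) * y ^ (j + m))"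
    unfolding beta_series_coeff_shift by (simp add: power_add algebra_simps)
  finally show ?thesis
    using p q y inc_beta_reg_eq_beta_series[of "p + real j" q y]
    by (simp add: powr_add powr_realpow)
qed

lemma sums_triangle_swap:
  fixes f g :: "nat \<Rightarrow> real"
  assumes f0: "\<And>j. f j \<ge> 0" and g0: "\<And>n. g n \<ge> 0" and "summable f" and g: "summable g"
  shows "(\<lambda>j. f j * (\<Sum>m. g (j + m))) sums (\<Sum>n. g n * (\<Sum>j\<le>n. f j))"
proof -
  define L where "L = (\<Sum>n. g n * (\<Sum>j\<le>n. f j))"
  define h where "h = (\<lambda>(n::nat, j::nat). g n * f j)"
  have "summable (\<lambda>n. g n * (\<Sum>j\<le>n. f j))"
  proof (rule summable_comparison_test[OF _ summable_mult2[OF g, of "suminf f"]])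
    have "(\<Sum>j\<le>n. f j) \<le> suminf f" for n
      using \<open>summable f\<close> f0 by (intro sum_le_suminf) auto
    then show "\<exists>N. \<forall>n\<ge>N. norm (g n * (\<Sum>j\<le>n. f j)) \<le> g n * suminf f"
      using g0 f0 by (auto simp: abs_mult sum_nonneg intro!: mult_left_mono)
  qed
  then have outer: "((\<lambda>n. g n * (\<Sum>j\<le>n. f j)) has_sum L) UNIV"
    unfolding L_def
    by (intro sums_nonneg_imp_has_sum summable_sums) (auto intro!: mult_nonneg_nonneg sum_nonneg f0 g0)
  have inner: "((\<lambda>j. h (n, j)) has_sum g n * (\<Sum>j\<le>n. f j)) {..n}" for n
    by (rule has_sum_finiteI) (auto simp: h_def sum_distrib_left)
  have "h summable_on Sigma UNIV (\<lambda>n. {..n})"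
    by (rule summable_on_SigmaI[OF inner has_sum_imp_summable[OF outer]])
       (auto simp: h_def intro!: mult_nonneg_nonneg f0 g0)
  then have "(h has_sum L) (Sigma UNIV (\<lambda>n. {..n}))"
    by (rule has_sum_SigmaI[OF inner outer])
  then have swapped: "((\<lambda>(j, n). g n * f j) has_sum L) (Sigma UNIV (\<lambda>j. {j..}))"
    by (subst has_sum_reindex_bij_witness[where i=prod.swap and j=prod.swap
          and T="Sigma UNIV (\<lambda>n. {..n})" and h=h]) (auto simp: h_def)
  have tail: "((\<lambda>n. g n * f j) has_sum f j * (\<Sum>m. g (j + m))) {j..}" for j
  proof -
    have "(\<lambda>m. g (j + m)) sums (\<Sum>m. g (j + m))"
      using summable_ignore_initial_segment[OF g, of j] by (simp add: add.commute summable_sums)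
    then have "((\<lambda>m. g (j + m)) has_sum (\<Sum>m. g (j + m))) UNIV"
      by (rule sums_nonneg_imp_has_sum) (rule g0)
    then have "(g has_sum (\<Sum>m. g (j + m))) {j..}"
      by (subst has_sum_reindex_bij_witness[where i="\<lambda>n. n - j" and j="\<lambda>m. j + m"
            and T="{j..}" and h=g and S=UNIV, symmetric]) auto
    then show ?thesis
      using has_sum_cmult_left by (fastforce simp: mult.commute)
  qed
  have "((\<lambda>j. f j * (\<Sum>m. g (j + m))) has_sum L) UNIV"
    by (rule has_sum_SigmaD[OF swapped]) (use tail in simp)
  then show ?thesis
    unfolding L_def by (rule has_sum_imp_sums)
qed

theorem mainTheorem16:
  fixes a b lam x :: real
  assumes "a > 0" and "b > 0" and "lam \<ge> 0" and "0 < x" and "x < 1"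
  shows "exp (- lam) * x powr a * (1 - x) powr b *
           (\<Sum>n. Gamma (a + b + real n) / (Gamma b * Gamma (a + 1 + real n)) * x ^ n *
                 (\<Sum>j\<le>n. lam ^ j / fact j))
         = noncentral_beta a b (2 * lam) x"
proof -
  define g where "g = (\<lambda>n. beta_series_coeff a b n * x ^ n)"
  define f where "f = (\<lambda>j. lam ^ j / fact j)"
  have "f sums exp lam"
    using exp_converges[of lam] by (simp add: f_def divide_inverse mult.commute)
  then have "(\<lambda>j. f j * (\<Sum>m. g (j + m))) sums (\<Sum>n. g n * (\<Sum>j\<le>n. f j))"
    using assms beta_series_coeff_pos[of a b] summable_beta_series[of a b x]
    by (intro sums_triangle_swap) (auto simp: f_def g_def sums_summable less_imp_le)
  moreover have "1 / fact j * (2 * lam / 2) ^ j * inc_beta_reg x (a + real j) b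
                   = x powr a * (1 - x) powr b * (f j * (\<Sum>m. g (j + m)))" for j
    using inc_beta_reg_shift_eq_series[of a b x j] assms by (simp add: f_def g_def)
  ultimately have "noncentral_beta a b (2 * lam) x
                     = exp (- lam) * (x powr a * (1 - x) powr b * (\<Sum>n. g n * (\<Sum>j\<le>n. f j)))"
    unfolding noncentral_beta_def by (simp add: sums_unique[symmetric] sums_mult)
  then show ?thesis
    by (simp add: g_def f_def beta_series_coeff_def mult.assoc)
qed

end
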